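(* Let $\varphi\in\mathcal{A}$ be w.h.i.s. Then the algebra of Casimirs of $(\mathcal{A},\{\cdot,\cdot\}_\varphi)$ is $H^0(\mathcal{A},\varphi)=\mathrm{Cas}(\mathcal{A},\varphi)=\{f\in\mathcal{A}\mid \vec\nabla f\times\vec\nabla\varphi=\vec 0\}=\bigoplus_{i\in\mathbf{N}}\mathbf{F}\varphi^i=\mathbf{F}[\varphi].$
   Context: $\mathbf{F}$ is a field of characteristic zero and $\mathcal{A}=\mathbf{F}[x,y,z]$. Elements of $\mathcal{A}^3$ are treated as vector fields: $\vec f\cdot\vec g$, $\vec f\times\vec g$ are the usual inner and cross products, $\vec\nabla f=(\partial f/\partial x,\partial f/\partial y,\partial f/\partial z)$, $\vec\nabla\times$ is the curl and $\mathrm{Div}$ the divergence. Fix positive integers $\varpi_1,\varpi_2,\varpi_3$ without common divisor $>1$ (weights of $x,y,z$). A nonzero polynomial is weight homogeneous of degree $d$ if it is an $\mathbf{F}$-linear combination of monomials $x^ay^bz^c$ with $a\varpi_1+b\varpi_2+c\varpi_3=d$; write $\varpi(f)=d$. $\varphi\in\mathcal{A}$ is w.h.i.s. if it is weight homogeneous and $\mathcal{A}_{sing}:=\mathcal{A}/\langle\partial_x\varphi,\partial_y\varphi,\partial_z\varphi\rangle$ is a nonzero finite-dimensional $\mathbf{F}$-vector space. The Poisson bracket $\{\cdot,\cdot\}_\varphi$ on $\mathcal{A}$ is the biderivation determined by $\{x,y\}_\varphi=\partial\varphi/\partial z$, $\{y,z\}_\varphi=\partial\varphi/\partial x$, $\{z,x\}_\varphi=\partial\varphi/\partial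 y$; its Casimirs are the $f$ with $\{f,\cdot\}_\varphi=0$, i.e. $\vec\nabla f\times\vec\nabla\varphi=\vec 0$. *)

theory Defs
  imports "HOL-Computational_Algebra.Polynomial"
begin

text \<open>F[x,y,z] is represented as ((F[x])[y])[z]: the innermost variable is x,
  the middle one y, the outermost one z.\<close>
type_synonym 'a mpoly3 = "'a poly poly poly"

definition C3 :: "'a::zero \<Rightarrow> 'a mpoly3" where
  "C3 c = [:[:[:c:]:]:]"

definition mcoeff3 :: "'a::zero mpoly3 \<Rightarrow> nat \<Rightarrow> nat \<Rightarrow> nat \<Rightarrow> 'a" where
  "mcoeff3 f a b c = coeff (coeff (coeff f c) b) a"

definition dx :: "'a::field mpoly3 \<Rightarrow> 'a mpoly3" where
  "dx f = map_poly (map_poly pderiv) f"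
definition dy :: "'a::field mpoly3 \<Rightarrow> 'a mpoly3" where
  "dy f = map_poly pderiv f"
definition dz :: "'a::field mpoly3 \<Rightarrow> 'a mpoly3" where
  "dz f = pderiv f"

definition weight_hom ::
  "nat \<Rightarrow> nat \<Rightarrow> nat \<Rightarrow> 'a::zero mpoly3 \<Rightarrow> nat \<Rightarrow> bool" where
  "weight_hom w1 w2 w3 f d \<longleftrightarrow> f \<noteq> 0 \<and>
     (\<forall>a b c. mcoeff3 f a b c \<noteq> 0 \<longrightarrow> a * w1 + b * w2 + c * w3 = d)"

definition in_jac :: "'a::field mpoly3 \<Rightarrow> 'a mpoly3 \<Rightarrow> bool" where
  "in_jac \<phi> f \<longleftrightarrow> (\<exists>a b c. f = a * dx \<phi> + b * dy \<phi> + c * dz \<phi>)"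

text \<open>A_sing = A / Jacobian ideal is nonzero and finite-dimensional over F:
  1 is not in the ideal, and a finite set spans the quotient.\<close>
definition whis :: "nat \<Rightarrow> nat \<Rightarrow> nat \<Rightarrow> 'a::field mpoly3 \<Rightarrow> bool" where
  "whis w1 w2 w3 \<phi> \<longleftrightarrow> (\<exists>d. weight_hom w1 w2 w3 \<phi> d) \<and>
     \<not> in_jac \<phi> 1 \<and>
     (\<exists>S. finite S \<and> (\<forall>f. \<exists>u. in_jac \<phi> (f - (\<Sum>s\<in>S. C3 (u s) * s))))"

text \<open>Poisson bracket {f,g}_phi = grad phi . (grad f x grad g).\<close>
definition pbr :: "'a::field mpoly3 \<Rightarrow> 'a mpoly3 \<Rightarrow> 'a mpoly3 \<Rightarrow> 'a mpoly3" where
  "pbr \<phi> f g = dx \<phi> * (dy f * dz g - dz f * dy g)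
              + dy \<phi> * (dz f * dx g - dx f * dz g)
              + dz \<phi> * (dx f * dy g - dy f * dx g)"

definition Cas :: "'a::field mpoly3 \<Rightarrow> 'a mpoly3 set" where
  "Cas \<phi> = {f. \<forall>g. pbr \<phi> f g = 0}"

definition cross_zero :: "'a::field mpoly3 \<Rightarrow> 'a mpoly3 \<Rightarrow> bool" where
  "cross_zero \<phi> f \<longleftrightarrow>
     dy f * dz \<phi> - dz f * dy \<phi> = 0 \<and>
     dz f * dx \<phi> - dx f * dz \<phi> = 0 \<and>
     dx f * dy \<phi> - dy f * dx \<phi> = 0"

definition eval_at :: "'a::field poly \<Rightarrow> 'a mpoly3 \<Rightarrow> 'a mpoly3" where
  "eval_at q \<phi> = poly (map_poly C3 q) \<phi>"

end

theory Submission
  imports Defs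
begin

(* Every q(phi) is a Casimir by the chain rule, and q |-> q(phi) is injective because phi
   involves z. Conversely, let E = w1 x d/dx + w2 y d/dy + w3 z d/dz be the Euler operator, so
   that E phi = d phi with d > 0. If grad f x grad phi = 0, then E(f) grad phi = d phi grad f,
   hence phi divides E(f) h for every h in the Jacobian ideal J. Since A/J is finite-dimensional,
   J contains a nonzero P(x) and a nonzero Q(z); these are coprime, so phi divides E(f).
   Writing E(f) = d phi g gives grad f = g grad phi with deg_z g < deg_z f. Then g is again a
   Casimir because mixed partials commute, so g = q(phi) by induction on deg_z, and f - Q(phi)
   with Q' = q has zero gradient, hence is constant. *)

section \<open>Derivations\<close>

lemma additive_of_nat_mult:
  fixes D :: "'a::comm_ring_1 \<Rightarrow> 'b::comm_ring_1"
  assumes "additive D"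
  shows "D (of_nat k * a) = of_nat k * D a"
  by (induction k) (simp_all add: additive.add[OF assms] additive.zero[OF assms] algebra_simps)

lemma additive_map_poly:
  fixes D :: "'a::comm_ring_1 \<Rightarrow> 'b::comm_ring_1"
  assumes "additive D"
  shows "additive (map_poly D)"
  by unfold_locales
    (simp add: poly_eq_iff coeff_map_poly additive.add[OF assms] additive.zero[OF assms])

lemma additive_pderiv: "additive (pderiv :: 'a::idom poly \<Rightarrow> _)"
  by unfold_locales (rule pderiv_add)

lemma pderiv_map_poly_additive:
  fixes D :: "'a::idom \<Rightarrow> 'b::idom"
  assumes "additive D"
  shows "pderiv (map_poly D p) = map_poly D (pderiv p)"
  by (rule poly_eqI)
    (simp add: coeff_pderiv coeff_map_poly additive.zero[OF assms] additive_of_nat_mult[OF assms]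
      del: of_nat_Suc)

definition derivation :: "('a::comm_ring_1 \<Rightarrow> 'a) \<Rightarrow> bool" where
  "derivation D \<longleftrightarrow> additive D \<and> (\<forall>a b. D (a * b) = D a * b + a * D b)"

lemma derivation_additive: "derivation D \<Longrightarrow> additive D"
  by (simp add: derivation_def)

lemma derivation_mult: "derivation D \<Longrightarrow> D (a * b) = D a * b + a * D b"
  by (simp add: derivation_def)

lemma derivation_pderiv: "derivation (pderiv :: 'a::idom poly \<Rightarrow> _)"
  by (simp add: derivation_def additive_pderiv pderiv_mult algebra_simps)

lemma derivation_map_poly:
  assumes D: "derivation D"
  shows "derivation (map_poly D)"
proof -
  interpret additive D
    using derivation_additive[OF D] .
  have "map_poly D (p * q) = map_poly D p * q + p * map_poly D q" for p q
  proof (rule poly_eqI)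
    fix n
    have "coeff (map_poly D (p * q)) n = (\<Sum>i\<le>n. D (coeff p i * coeff q (n - i)))"
      by (simp add: coeff_map_poly zero coeff_mult sum)
    also have "\<dots> = coeff (map_poly D p * q + p * map_poly D q) n"
      by (simp add: derivation_mult[OF D] sum.distrib coeff_mult coeff_map_poly zero)
    finally show "coeff (map_poly D (p * q)) n = coeff (map_poly D p * q + p * map_poly D q) n" .
  qed
  then show ?thesis
    by (simp add: derivation_def additive_map_poly[OF derivation_additive[OF D]])
qed

lemma derivation_poly_chain_rule:
  assumes D: "derivation D" and const: "\<And>i. D (coeff p i) = 0"
  shows "D (poly p x) = poly (pderiv p) x * D x"
  using const
proof (induction p)
  case (pCons a p)
  then have "D a = 0" "\<And>i. D (coeff p i) = 0"
    using pCons.prems[of 0] pCons.prems[of "Suc i" for i] by simp_all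
  with pCons.IH show ?case
    by (simp add: additive.add[OF derivation_additive[OF D]] derivation_mult[OF D] pderiv_pCons
        algebra_simps)
qed (simp add: additive.zero[OF derivation_additive[OF D]])

lemma derivation_dx: "derivation (dx :: 'a::field mpoly3 \<Rightarrow> _)"
  unfolding dx_def[abs_def] by (intro derivation_map_poly derivation_pderiv)

lemma derivation_dy: "derivation (dy :: 'a::field mpoly3 \<Rightarrow> _)"
  unfolding dy_def[abs_def] by (intro derivation_map_poly derivation_pderiv)

lemma derivation_dz: "derivation (dz :: 'a::field mpoly3 \<Rightarrow> _)"
  unfolding dz_def[abs_def] by (rule derivation_pderiv)

lemma dz_dy_commute: "dz (dy f) = dy (dz f)"
  unfolding dz_def dy_def by (rule pderiv_map_poly_additive[OF additive_pderiv])

lemma dz_dx_commute: "dz (dx f) = dx (dz f)"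
  unfolding dz_def dx_def
  by (rule pderiv_map_poly_additive[OF additive_map_poly[OF additive_pderiv]])

lemma dy_dx_commute: "dy (dx f) = dx (dy f)"
proof -
  have "pderiv \<circ> map_poly pderiv = map_poly pderiv \<circ> (pderiv :: 'a poly poly \<Rightarrow> _)"
    by (rule ext) (simp add: pderiv_map_poly_additive[OF additive_pderiv])
  then show ?thesis
    by (simp add: dx_def dy_def map_poly_map_poly)
qed

lemma C3_0 [simp]: "C3 0 = 0"
  by (simp add: C3_def)

lemma C3_1 [simp]: "C3 1 = 1"
  by (simp add: C3_def pCons_one)

lemma additive_C3: "additive (C3 :: 'a::comm_ring_1 \<Rightarrow> _)"
  by unfold_locales (simp add: C3_def)

lemma C3_mult: "C3 (a * b) = C3 a * C3 b"
  by (simp add: C3_def mult.commute)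

lemma dx_C3 [simp]: "dx (C3 c) = 0"
  by (simp add: dx_def C3_def map_poly_pCons)

lemma dy_C3 [simp]: "dy (C3 c) = 0"
  by (simp add: dy_def C3_def map_poly_pCons)

lemma dz_C3 [simp]: "dz (C3 c) = 0"
  by (simp add: dz_def C3_def)

lemma gradient_eq_0_imp_const:
  fixes h :: "'a::field_char_0 mpoly3"
  assumes "dx h = 0" "dy h = 0" "dz h = 0"
  shows "\<exists>c. h = C3 c"
proof -
  obtain h0 where h0: "h = [:h0:]"
    using assms(3) pderiv_iszero by (auto simp: dz_def)
  obtain h00 where h00: "h0 = [:h00:]"
    using assms(2) pderiv_iszero by (auto simp: h0 dy_def map_poly_pCons split: if_splits)
  obtain c where "h00 = [:c:]"
    using assms(1) pderiv_iszero by (auto simp: h0 h00 dx_def map_poly_pCons split: if_splits)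
  with h0 h00 show ?thesis
    by (auto simp: C3_def)
qed

definition var_x :: "'a::comm_ring_1 mpoly3" where "var_x = [:[:[:0, 1:]:]:]"
definition var_y :: "'a::comm_ring_1 mpoly3" where "var_y = [:[:0, 1:]:]"
definition var_z :: "'a::comm_ring_1 mpoly3" where "var_z = [:0, 1:]"

lemma gradient_var_x: "dx var_x = 1" "dy var_x = 0" "dz var_x = 0"
  by (simp_all add: var_x_def dx_def dy_def dz_def map_poly_pCons map_poly_1 pderiv_pCons pCons_one)

lemma gradient_var_y: "dx var_y = 0" "dy var_y = 1" "dz var_y = 0"
  by (simp_all add: var_y_def dx_def dy_def dz_def map_poly_pCons map_poly_1 pderiv_pCons pCons_one)

lemma gradient_var_z: "dx var_z = 0" "dy var_z = 0" "dz var_z = 1"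
  by (simp_all add: var_z_def dx_def dy_def dz_def map_poly_pCons map_poly_1 pderiv_pCons pCons_one)

lemma pbr_eq_triple_product:
  "pbr \<phi> f g = dx g * (dy \<phi> * dz f - dz \<phi> * dy f) + dy g * (dz \<phi> * dx f - dx \<phi> * dz f)
     + dz g * (dx \<phi> * dy f - dy \<phi> * dx f)"
  unfolding pbr_def by (simp add: algebra_simps)

lemma Cas_eq_cross_zero: "Cas \<phi> = {f. cross_zero \<phi> f}"
proof (intro set_eqI iffI; simp)
  fix f
  assume "f \<in> Cas \<phi>"
  then have "pbr \<phi> f var_x = 0" "pbr \<phi> f var_y = 0" "pbr \<phi> f var_z = 0"
    by (auto simp: Cas_def)
  then show "cross_zero \<phi> f"
    by (simp_all add: pbr_eq_triple_product cross_zero_def gradient_var_x gradient_var_y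
        gradient_var_z algebra_simps)
next
  fix f
  assume "cross_zero \<phi> f"
  then show "f \<in> Cas \<phi>"
    by (simp add: Cas_def cross_zero_def pbr_eq_triple_product mult.commute)
qed

lemma eval_at_0 [simp]: "eval_at 0 \<phi> = 0"
  by (simp add: eval_at_def)

lemma eval_at_pCons: "eval_at (pCons a q) \<phi> = C3 a + \<phi> * eval_at q \<phi>"
  by (simp add: eval_at_def map_poly_pCons)

lemma eval_at_const: "eval_at [:c:] \<phi> = C3 c"
  by (simp add: eval_at_pCons)

lemma additive_eval_at: "additive (\<lambda>q. eval_at q \<phi>)"
  by unfold_locales (simp add: eval_at_def additive.add[OF additive_map_poly[OF additive_C3]])

lemma derivation_eval_at:
  assumes D: "derivation D" and "\<And>c. D (C3 c) = 0"
  shows "D (eval_at q \<phi>) = eval_at (pderiv q) \<phi> * D \<phi>"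
  unfolding eval_at_def
  by (subst derivation_poly_chain_rule[OF D])
    (simp_all add: assms coeff_map_poly pderiv_map_poly_additive[OF additive_C3])

lemma cross_zero_eval_at: "cross_zero \<phi> (eval_at q \<phi>)"
  by (simp add: cross_zero_def algebra_simps
      derivation_eval_at[OF derivation_dx] derivation_eval_at[OF derivation_dy]
      derivation_eval_at[OF derivation_dz])

definition x_poly :: "'a::zero poly \<Rightarrow> 'a mpoly3" where
  "x_poly p = [:[:p:]:]"

definition z_poly :: "'a::zero poly \<Rightarrow> 'a mpoly3" where
  "z_poly p = map_poly (\<lambda>c. [:[:c:]:]) p"

lemma eval_at_eq_pcompose: "eval_at q \<phi> = pcompose (z_poly q) \<phi>"
  by (induction q) (simp_all add: eval_at_pCons z_poly_def map_poly_pCons pcompose_pCons C3_def)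

lemma inj_eval_at:
  assumes "0 < degree \<phi>"
  shows "inj (\<lambda>q. eval_at q \<phi>)"
proof (rule injI)
  fix p q
  assume "eval_at p \<phi> = eval_at q \<phi>"
  then have "pcompose (z_poly (p - q)) \<phi> = 0"
    by (simp add: additive.diff[OF additive_eval_at] flip: eval_at_eq_pcompose)
  then have "z_poly (p - q) = 0"
    using pcompose_eq_0[OF _ assms] by blast
  then show "p = q"
    by (simp add: z_poly_def map_poly_eq_0_iff)
qed

section \<open>The Euler operator\<close>

lemma mpoly3_eqI: "(\<And>a b c. mcoeff3 f a b c = mcoeff3 g a b c) \<Longrightarrow> f = g"
  unfolding mcoeff3_def by (intro poly_eqI) blast

lemma mcoeff3_add: "mcoeff3 (f + g) a b c = mcoeff3 f a b c + mcoeff3 g a b c"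
  by (simp add: mcoeff3_def)

lemma mcoeff3_C3_mult: "mcoeff3 (C3 k * f) a b c = k * mcoeff3 f a b c"
  by (simp add: mcoeff3_def C3_def)

lemma coeff_pCons_0_1_mult:
  "coeff ([:0, 1:] * p) n = (if n = 0 then 0 else coeff (p :: 'a::comm_semiring_1 poly) (n - 1))"
  by (simp add: coeff_pCons split: nat.splits)

lemma mcoeff3_var_x_dx:
  "mcoeff3 (var_x * dx h) a b c = of_nat a * mcoeff3 (h :: 'a::field mpoly3) a b c"
  by (cases a)
    (simp_all add: mcoeff3_def var_x_def dx_def coeff_map_poly coeff_pCons_0_1_mult coeff_pderiv)

lemma mcoeff3_var_y_dy:
  "mcoeff3 (var_y * dy h) a b c = of_nat b * mcoeff3 (h :: 'a::field mpoly3) a b c"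
  by (cases b) (simp_all add: mcoeff3_def var_y_def dy_def coeff_map_poly coeff_pCons_0_1_mult
      coeff_pderiv of_nat_poly del: of_nat_Suc)

lemma mcoeff3_var_z_dz:
  "mcoeff3 (var_z * dz h) a b c = of_nat c * mcoeff3 (h :: 'a::field mpoly3) a b c"
  by (cases c) (simp_all add: mcoeff3_def var_z_def dz_def coeff_map_poly coeff_pCons_0_1_mult
      coeff_pderiv of_nat_poly del: of_nat_Suc)

definition euler_op :: "nat \<Rightarrow> nat \<Rightarrow> nat \<Rightarrow> 'a::field mpoly3 \<Rightarrow> 'a mpoly3" where
  "euler_op w1 w2 w3 h =
     C3 (of_nat w1) * var_x * dx h + C3 (of_nat w2) * var_y * dy h + C3 (of_nat w3) * var_z * dz h"

lemma mcoeff3_euler_op: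
  "mcoeff3 (euler_op w1 w2 w3 h) a b c = of_nat (a * w1 + b * w2 + c * w3) * mcoeff3 h a b c"
  unfolding euler_op_def mult.assoc mcoeff3_add mcoeff3_C3_mult mcoeff3_var_x_dx
    mcoeff3_var_y_dy mcoeff3_var_z_dz
  by (simp add: algebra_simps)

lemma euler_op_weight_hom:
  assumes "weight_hom w1 w2 w3 \<phi> d"
  shows "euler_op w1 w2 w3 \<phi> = C3 (of_nat d) * \<phi>"
proof (rule mpoly3_eqI)
  fix a b c
  show "mcoeff3 (euler_op w1 w2 w3 \<phi>) a b c = mcoeff3 (C3 (of_nat d) * \<phi>) a b c"
    using assms unfolding weight_hom_def
    by (cases "mcoeff3 \<phi> a b c = 0") (simp_all add: mcoeff3_euler_op mcoeff3_C3_mult)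
qed

lemma degree_euler_op_le: "degree (euler_op w1 w2 w3 h) \<le> degree h"
proof (rule degree_le, intro allI impI)
  fix i
  assume "degree h < i"
  then have "mcoeff3 (euler_op w1 w2 w3 h) a b i = 0" for a b
    by (subst mcoeff3_euler_op) (simp add: mcoeff3_def coeff_eq_0)
  then show "coeff (euler_op w1 w2 w3 h) i = 0"
    by (simp add: mcoeff3_def poly_eq_iff)
qed

lemma parallel_dot_mult:
  fixes f1 :: "'a::idom"
  assumes "f2 * p3 = f3 * p2" "f3 * p1 = f1 * p3" "f1 * p2 = f2 * p1"
  shows "(e1 * f1 + e2 * f2 + e3 * f3) * p1 = (e1 * p1 + e2 * p2 + e3 * p3) * f1"
    and "(e1 * f1 + e2 * f2 + e3 * f3) * p2 = (e1 * p1 + e2 * p2 + e3 * p3) * f2"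
    and "(e1 * f1 + e2 * f2 + e3 * f3) * p3 = (e1 * p1 + e2 * p2 + e3 * p3) * f3"
  using assms by algebra+

lemma euler_op_mult_gradient:
  assumes "cross_zero \<phi> f"
  shows "euler_op w1 w2 w3 f * dx \<phi> = euler_op w1 w2 w3 \<phi> * dx f"
    and "euler_op w1 w2 w3 f * dy \<phi> = euler_op w1 w2 w3 \<phi> * dy f"
    and "euler_op w1 w2 w3 f * dz \<phi> = euler_op w1 w2 w3 \<phi> * dz f"
  using assms unfolding euler_op_def cross_zero_def
  by (intro parallel_dot_mult; simp)+

section \<open>Univariate elements of the Jacobian ideal\<close>

lemma finite_family_dependent:
  fixes u :: "'i \<Rightarrow> 's \<Rightarrow> 'a::field"
  assumes "finite S" "finite I" "card S < card I"
  shows "\<exists>c. (\<exists>i\<in>I. c i \<noteq> 0) \<and> (\<forall>s\<in>S. (\<Sum>i\<in>I. c i * u i s) = 0)"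
  using assms
proof (induction S arbitrary: I u rule: finite_induct)
  case empty
  then show ?case
    by (intro exI[of _ "\<lambda>_. 1"]) (auto simp: card_gt_0_iff)
next
  case (insert t S)
  show ?case
  proof (cases "\<forall>i\<in>I. u i t = 0")
    case True
    have "card S < card I"
      using insert by simp
    with insert.IH[of I u] insert.prems True show ?thesis
      by auto
  next
    case False
    then obtain k where k: "k \<in> I" "u k t \<noteq> 0"
      by blast
    \<comment> \<open>Gaussian elimination: clear the column of t using the pivot u k t.\<close>
    define u' where "u' i s = u i s - u i t / u k t * u k s" for i s
    have "card S < card (I - {k})"
      using insert k by simp
    with insert.IH[of "I - {k}" u'] insert.prems obtain c where
      c: "\<exists>i\<in>I - {k}. c i \<noteq> 0" "\<forall>s\<in>S. (\<Sum>i\<in>I - {k}. c i * u' i s) = 0"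
      by auto
    define c' where "c' i = (if i = k then - (\<Sum>j\<in>I - {k}. c j * u j t) / u k t else c i)" for i
    have comb: "(\<Sum>i\<in>I. c' i * u i s) = (\<Sum>i\<in>I - {k}. c i * u' i s)" for s
    proof -
      have "(\<Sum>i\<in>I. c' i * u i s) = c' k * u k s + (\<Sum>i\<in>I - {k}. c i * u i s)"
        using insert.prems k by (simp add: sum.remove c'_def)
      then show ?thesis
        by (simp add: u'_def c'_def algebra_simps sum_subtractf sum_distrib_left
            sum_divide_distrib)
    qed
    have "u' i t = 0" for i
      using k by (simp add: u'_def)
    then show ?thesis
      using c k comb by (intro exI[of _ c']) (auto simp: c'_def)
  qed
qed

lemma in_jac_0: "in_jac \<phi> 0"
  unfolding in_jac_def by (intro exI[of _ 0]) simp

lemma in_jac_add: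
  assumes "in_jac \<phi> f" "in_jac \<phi> g"
  shows "in_jac \<phi> (f + g)"
proof -
  obtain a b c a' b' c' where
    "f = a * dx \<phi> + b * dy \<phi> + c * dz \<phi>" "g = a' * dx \<phi> + b' * dy \<phi> + c' * dz \<phi>"
    using assms by (auto simp: in_jac_def)
  then have "f + g = (a + a') * dx \<phi> + (b + b') * dy \<phi> + (c + c') * dz \<phi>"
    by (simp add: algebra_simps)
  then show ?thesis
    unfolding in_jac_def by blast
qed

lemma in_jac_mult:
  assumes "in_jac \<phi> f"
  shows "in_jac \<phi> (h * f)"
proof -
  obtain a b c where "f = a * dx \<phi> + b * dy \<phi> + c * dz \<phi>"
    using assms by (auto simp: in_jac_def)
  then have "h * f = (h * a) * dx \<phi> + (h * b) * dy \<phi> + (h * c) * dz \<phi>"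
    by (simp add: algebra_simps)
  then show ?thesis
    unfolding in_jac_def by blast
qed

lemma in_jac_sum: "(\<And>i. i \<in> A \<Longrightarrow> in_jac \<phi> (g i)) \<Longrightarrow> in_jac \<phi> (sum g A)"
  by (induction A rule: infinite_finite_induct) (auto intro: in_jac_0 in_jac_add)

lemma whis_dependent_mod_jac:
  fixes e :: "nat \<Rightarrow> 'a::field mpoly3"
  assumes "whis w1 w2 w3 \<phi>"
  shows "\<exists>N c. (\<exists>n\<le>N. c n \<noteq> 0) \<and> in_jac \<phi> (\<Sum>n\<le>N. C3 (c n) * e n)"
proof -
  obtain S where S: "finite S" "\<forall>f. \<exists>u. in_jac \<phi> (f - (\<Sum>s\<in>S. C3 (u s) * s))"
    using assms by (auto simp: whis_def)
  then have "\<forall>n. \<exists>v. in_jac \<phi> (e n - (\<Sum>s\<in>S. C3 (v s) * s))"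
    by blast
  then obtain u where u: "\<And>n. in_jac \<phi> (e n - (\<Sum>s\<in>S. C3 (u n s) * s))"
    by (metis choice)
  let ?N = "card S"
  obtain c where c: "\<exists>n\<le>?N. c n \<noteq> 0" "\<forall>s\<in>S. (\<Sum>n\<le>?N. c n * u n s) = 0"
    using finite_family_dependent[OF S(1), of "{..?N}" u] by auto
  have "(\<Sum>n\<le>?N. C3 (c n) * e n)
      = (\<Sum>n\<le>?N. C3 (c n) * (e n - (\<Sum>s\<in>S. C3 (u n s) * s)))
        + (\<Sum>n\<le>?N. \<Sum>s\<in>S. C3 (c n) * (C3 (u n s) * s))"
    by (simp add: right_diff_distrib sum_distrib_left flip: sum.distrib)
  also have "(\<Sum>n\<le>?N. \<Sum>s\<in>S. C3 (c n) * (C3 (u n s) * s))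
      = (\<Sum>s\<in>S. C3 (\<Sum>n\<le>?N. c n * u n s) * s)"
    by (subst sum.swap)
      (simp add: additive.sum[OF additive_C3] sum_distrib_right C3_mult mult.assoc)
  also have "(\<Sum>s\<in>S. C3 (\<Sum>n\<le>?N. c n * u n s) * s) = 0"
    using c(2) by simp
  finally have "in_jac \<phi> (\<Sum>n\<le>?N. C3 (c n) * e n)"
    by (simp add: in_jac_sum in_jac_mult u)
  with c(1) show ?thesis
    by blast
qed

lemma coeff_sum_monom: "coeff (\<Sum>n\<le>N. monom (c n) n) m = (if m \<le> N then c m else 0)"
  by (simp add: coeff_sum coeff_monom)

lemma whis_jac_contains_nonzero_image:
  fixes h :: "'a::field poly \<Rightarrow> 'a mpoly3"
  assumes "whis w1 w2 w3 \<phi>"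
    and "additive h"
    and smult: "\<And>c p. h (smult c p) = C3 c * h p"
  shows "\<exists>P. P \<noteq> 0 \<and> in_jac \<phi> (h P)"
proof -
  obtain N c where c: "\<exists>n\<le>N. c n \<noteq> 0" "in_jac \<phi> (\<Sum>n\<le>N. C3 (c n) * h (monom 1 n))"
    using whis_dependent_mod_jac[OF assms(1), of "\<lambda>n. h (monom 1 n)"] by blast
  have "h (\<Sum>n\<le>N. monom (c n) n) = (\<Sum>n\<le>N. C3 (c n) * h (monom 1 n))"
    by (simp add: additive.sum[OF \<open>additive h\<close>] smult_monom flip: smult)
  moreover have "(\<Sum>n\<le>N. monom (c n) n) \<noteq> 0"
    using c(1) by (metis coeff_0 coeff_sum_monom)
  ultimately show ?thesis
    using c(2) by auto
qed

lemma additive_x_poly: "additive (x_poly :: 'a::comm_ring_1 poly \<Rightarrow> _)"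
  by unfold_locales (simp add: x_poly_def)

lemma x_poly_smult: "x_poly (smult c p) = C3 c * x_poly (p :: 'a::comm_ring_1 poly)"
  by (simp add: x_poly_def C3_def)

lemma additive_z_poly: "additive (z_poly :: 'a::comm_ring_1 poly \<Rightarrow> _)"
  unfolding z_poly_def by (intro additive_map_poly) (unfold_locales, simp)

lemma z_poly_smult: "z_poly (smult c p) = C3 c * z_poly (p :: 'a::comm_ring_1 poly)"
  by (simp add: z_poly_def C3_def map_poly_smult)

lemma whis_degree_pos:
  assumes "whis w1 w2 w3 \<phi>"
  shows "0 < degree \<phi>"
proof (rule ccontr)
  assume "\<not> 0 < degree \<phi>"
  then obtain \<phi>0 where \<phi>: "\<phi> = [:\<phi>0:]"
    using degree_eq_zeroE by blast
  obtain Q where Q: "Q \<noteq> 0" "in_jac \<phi> (z_poly Q)"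
    using whis_jac_contains_nonzero_image[OF assms additive_z_poly z_poly_smult] by blast
  then obtain a b c where abc: "z_poly Q = a * dx \<phi> + b * dy \<phi> + c * dz \<phi>"
    by (auto simp: in_jac_def)
  define u where "u = map_poly pderiv \<phi>0"
  define v where "v = pderiv \<phi>0"
  have d: "dx \<phi> = [:u:]" "dy \<phi> = [:v:]" "dz \<phi> = 0"
    by (simp_all add: \<phi> dx_def dy_def dz_def u_def v_def map_poly_pCons)
  obtain m where m: "coeff Q m \<noteq> 0"
    using Q(1) leading_coeff_neq_0 by blast
  define k where "k = coeff Q m"
  \<comment> \<open>As \<phi> does not involve z, comparing coefficients of z^m turns the
    nonzero constant k into an element of the Jacobian ideal.\<close>
  have k: "[:[:k:]:] = coeff a m * u + coeff b m * v"
    using arg_cong[OF abc, of "\<lambda>p. coeff p m"] by (simp add: d z_poly_def coeff_map_poly k_def)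
  have "[:[:[:1 / k:]:] * coeff a m:] * dx \<phi> + [:[:[:1 / k:]:] * coeff b m:] * dy \<phi> + 0 * dz \<phi>
      = [:[:[:1 / k:]:] * [:[:k:]:]:]"
    unfolding d k by (simp add: algebra_simps)
  also have "\<dots> = 1"
    using m by (simp add: k_def pCons_one)
  finally have "in_jac \<phi> 1"
    unfolding in_jac_def by (metis (no_types))
  then show False
    using assms by (simp add: whis_def)
qed

lemma degree_diff_lead_monom_less:
  fixes p :: "'a::comm_ring_1 poly"
  defines "p' \<equiv> p - monom (lead_coeff p) (degree p)"
  shows "p' = 0 \<or> degree p' < degree p"
proof -
  have "coeff p' i = 0" if "degree p \<le> i" for i
    using that by (cases "i = degree p") (auto simp: p'_def coeff_monom coeff_eq_0)
  then show ?thesis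
    using leading_coeff_neq_0[of p'] not_le by blast
qed

lemma const_poly_dvd_mult_cancel:
  fixes r :: "'a::idom" and q :: "'a poly"
  assumes unit: "lead_coeff q dvd 1"
  shows "[:r:] dvd q * p \<Longrightarrow> [:r:] dvd p"
proof (induction "degree p" arbitrary: p rule: less_induct)
  case less
  show ?case
  proof (cases "p = 0")
    case False
    obtain v where v: "1 = lead_coeff q * v"
      using unit by (rule dvdE)
    have "r dvd coeff (q * p) (degree q + degree p)"
      using less.prems const_poly_dvd_iff by blast
    then have "r dvd lead_coeff q * lead_coeff p"
      by (simp add: coeff_mult_degree_sum)
    then have "r dvd v * (lead_coeff q * lead_coeff p)"
      by (rule dvd_mult)
    then have "r dvd lead_coeff p"
      by (metis v mult.assoc mult.commute mult.left_neutral)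
    then have m: "[:r:] dvd monom (lead_coeff p) (degree p)"
      by (simp add: const_poly_dvd_iff coeff_monom)
    define p' where "p' = p - monom (lead_coeff p) (degree p)"
    have "[:r:] dvd q * p'"
      using less.prems m by (simp add: p'_def right_diff_distrib dvd_diff)
    moreover have "p' = 0 \<or> degree p' < degree p"
      unfolding p'_def by (rule degree_diff_lead_monom_less)
    ultimately have "[:r:] dvd p'"
      using less.hyps by auto
    then have "[:r:] dvd p' + monom (lead_coeff p) (degree p)"
      using m by (rule dvd_add)
    then show ?thesis
      by (simp add: p'_def)
  qed simp
qed

lemma x_poly_dvd_z_poly_mult_cancel:
  fixes P Q :: "'a::field poly"
  assumes "Q \<noteq> 0" "x_poly P dvd z_poly Q * \<alpha>"
  shows "x_poly P dvd \<alpha>"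
proof -
  have lc: "lead_coeff (z_poly Q) = [:[:lead_coeff Q:]:]"
    by (simp add: z_poly_def degree_map_poly coeff_map_poly)
  have "[:[:lead_coeff Q:]:] dvd 1"
    using assms(1) by (intro dvdI[of _ _ "[:[:1 / lead_coeff Q:]:]"]) (simp add: pCons_one)
  then have "lead_coeff (z_poly Q) dvd 1"
    unfolding lc .
  from const_poly_dvd_mult_cancel[OF this] show ?thesis
    using assms(2) unfolding x_poly_def .
qed

section \<open>Casimirs are polynomials in \<phi>\<close>

lemma dvd_euler_op_mult_in_jac:
  assumes "weight_hom w1 w2 w3 \<phi> d" "cross_zero \<phi> f" "in_jac \<phi> h"
  shows "\<phi> dvd euler_op w1 w2 w3 f * h"
proof -
  obtain a b c where h: "h = a * dx \<phi> + b * dy \<phi> + c * dz \<phi>"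
    using assms(3) by (auto simp: in_jac_def)
  have "euler_op w1 w2 w3 f * h = a * (euler_op w1 w2 w3 f * dx \<phi>)
      + b * (euler_op w1 w2 w3 f * dy \<phi>) + c * (euler_op w1 w2 w3 f * dz \<phi>)"
    unfolding h by (simp add: algebra_simps)
  also have "\<dots> = a * (euler_op w1 w2 w3 \<phi> * dx f)
      + b * (euler_op w1 w2 w3 \<phi> * dy f) + c * (euler_op w1 w2 w3 \<phi> * dz f)"
    by (simp only: euler_op_mult_gradient[OF assms(2)])
  also have "\<dots> = \<phi> * (C3 (of_nat d) * (a * dx f + b * dy f + c * dz f))"
    by (simp add: euler_op_weight_hom[OF assms(1)] algebra_simps)
  finally show ?thesis
    by (rule dvdI)
qed

lemma whis_dvd_euler_op:
  assumes whis: "whis w1 w2 w3 \<phi>" and wh: "weight_hom w1 w2 w3 \<phi> d" and cz: "cross_zero \<phi> f"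
  shows "\<phi> dvd euler_op w1 w2 w3 f"
proof -
  let ?E = "euler_op w1 w2 w3 f"
  obtain P where P: "P \<noteq> 0" "in_jac \<phi> (x_poly P)"
    using whis_jac_contains_nonzero_image[OF whis additive_x_poly x_poly_smult] by blast
  obtain Q where Q: "Q \<noteq> 0" "in_jac \<phi> (z_poly Q)"
    using whis_jac_contains_nonzero_image[OF whis additive_z_poly z_poly_smult] by blast
  obtain \<alpha> where \<alpha>: "?E * x_poly P = \<phi> * \<alpha>"
    using dvd_euler_op_mult_in_jac[OF wh cz P(2)] by blast
  obtain \<beta> where \<beta>: "?E * z_poly Q = \<phi> * \<beta>"
    using dvd_euler_op_mult_in_jac[OF wh cz Q(2)] by blast
  have "\<phi> * (z_poly Q * \<alpha>) = z_poly Q * (\<phi> * \<alpha>)"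
    by (simp add: ac_simps)
  also have "\<dots> = z_poly Q * (?E * x_poly P)"
    by (simp only: \<alpha>)
  also have "\<dots> = x_poly P * (?E * z_poly Q)"
    by (simp add: ac_simps)
  also have "\<dots> = x_poly P * (\<phi> * \<beta>)"
    by (simp only: \<beta>)
  also have "\<dots> = \<phi> * (x_poly P * \<beta>)"
    by (simp add: ac_simps)
  moreover have "\<phi> \<noteq> 0"
    using whis_degree_pos[OF whis] by auto
  ultimately have "z_poly Q * \<alpha> = x_poly P * \<beta>"
    by simp
  \<comment> \<open>x_poly P and z_poly Q are coprime, so the factor P(x) divides \<alpha>.\<close>
  then have "x_poly P dvd \<alpha>"
    using x_poly_dvd_z_poly_mult_cancel[OF Q(1)] by simp
  then obtain \<gamma> where "\<alpha> = x_poly P * \<gamma>"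
    by blast
  with \<alpha> have "x_poly P * ?E = x_poly P * (\<phi> * \<gamma>)"
    by (simp add: ac_simps)
  moreover have "x_poly P \<noteq> 0"
    using P(1) by (simp add: x_poly_def)
  ultimately show ?thesis
    by simp
qed

lemma whis_weight_pos:
  assumes "whis w1 w2 w3 \<phi>" "weight_hom w1 w2 w3 \<phi> d" "0 < w3"
  shows "0 < d"
proof -
  let ?b = "degree (lead_coeff \<phi>)" and ?a = "degree (lead_coeff (lead_coeff \<phi>))"
  have "0 < degree \<phi>"
    using whis_degree_pos[OF assms(1)] .
  then have "lead_coeff (lead_coeff (lead_coeff \<phi>)) \<noteq> 0"
    by auto
  then have "?a * w1 + ?b * w2 + degree \<phi> * w3 = d"
    using assms(2) by (simp add: weight_hom_def mcoeff3_def)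
  moreover have "0 < degree \<phi> * w3"
    using \<open>0 < degree \<phi>\<close> \<open>0 < w3\<close> by simp
  ultimately show ?thesis
    by linarith
qed

lemma cross_zero_gradient_factor:
  fixes \<phi> :: "'a::field_char_0 mpoly3"
  assumes whis: "whis w1 w2 w3 \<phi>" and wh: "weight_hom w1 w2 w3 \<phi> d" and "0 < w3"
    and cz: "cross_zero \<phi> f"
  obtains g where "dx f = g * dx \<phi>" "dy f = g * dy \<phi>" "dz f = g * dz \<phi>"
    and "g = 0 \<or> degree g < degree f"
proof -
  obtain \<gamma> where \<gamma>: "euler_op w1 w2 w3 f = \<phi> * \<gamma>"
    using whis_dvd_euler_op[OF whis wh cz] by blast
  have \<phi>: "\<phi> \<noteq> 0" "0 < degree \<phi>"
    using whis_degree_pos[OF whis] by auto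
  have d: "(of_nat d :: 'a) \<noteq> 0"
    using whis_weight_pos[OF whis wh \<open>0 < w3\<close>] by simp
  define g where "g = C3 (1 / of_nat d) * \<gamma>"
  have factor: "D f = g * D \<phi>"
    if "euler_op w1 w2 w3 f * D \<phi> = euler_op w1 w2 w3 \<phi> * D f" for D
  proof -
    have "\<phi> * (\<gamma> * D \<phi>) = \<phi> * (C3 (of_nat d) * D f)"
      using that \<gamma> by (simp add: euler_op_weight_hom[OF wh] ac_simps)
    then have "\<gamma> * D \<phi> = C3 (of_nat d) * D f"
      using \<phi>(1) by simp
    moreover have "C3 (1 / of_nat d) * C3 (of_nat d) = (1 :: 'a mpoly3)"
      using d by (simp flip: C3_mult)
    ultimately show ?thesis
      by (metis g_def mult.assoc mult_1)
  qed
  have "g = 0 \<or> degree g < degree f"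
  proof (cases "\<gamma> = 0")
    case False
    have "degree \<phi> + degree \<gamma> = degree (euler_op w1 w2 w3 f)"
      using \<gamma> \<phi>(1) False by (simp add: degree_mult_eq)
    also have "\<dots> \<le> degree f"
      by (rule degree_euler_op_le)
    finally show ?thesis
      using \<phi>(2) d by (simp add: g_def C3_def)
  qed (simp add: g_def)
  with factor[OF euler_op_mult_gradient(1)[OF cz]] factor[OF euler_op_mult_gradient(2)[OF cz]]
    factor[OF euler_op_mult_gradient(3)[OF cz]] show ?thesis
    using that by blast
qed

lemma cross_zero_cofactor:
  assumes gx: "dx f = g * dx \<phi>" and gy: "dy f = g * dy \<phi>" and gz: "dz f = g * dz \<phi>"
  shows "cross_zero \<phi> g"
proof -
  \<comment> \<open>The curl of grad f = g grad \<phi> vanishes, and so does that of grad \<phi>.\<close>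
  have "dy g * dx \<phi> = dx g * dy \<phi>"
    using arg_cong[OF gx, of dy] arg_cong[OF gy, of dx] dy_dx_commute[of f] dy_dx_commute[of \<phi>]
    by (simp add: derivation_mult[OF derivation_dx] derivation_mult[OF derivation_dy])
  moreover have "dz g * dx \<phi> = dx g * dz \<phi>"
    using arg_cong[OF gx, of dz] arg_cong[OF gz, of dx] dz_dx_commute[of f] dz_dx_commute[of \<phi>]
    by (simp add: derivation_mult[OF derivation_dx] derivation_mult[OF derivation_dz])
  moreover have "dz g * dy \<phi> = dy g * dz \<phi>"
    using arg_cong[OF gy, of dz] arg_cong[OF gz, of dy] dz_dy_commute[of f] dz_dy_commute[of \<phi>]
    by (simp add: derivation_mult[OF derivation_dy] derivation_mult[OF derivation_dz])
  ultimately show ?thesis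
    by (simp add: cross_zero_def)
qed

lemma pderiv_surj: "\<exists>Q. pderiv Q = (q :: 'a::field_char_0 poly)"
proof
  let ?Q = "\<Sum>i\<le>degree q. monom (coeff q i / of_nat (Suc i)) (Suc i)"
  have "pderiv ?Q = (\<Sum>i\<le>degree q. monom (coeff q i) i)"
    by (simp add: additive.sum[OF additive_pderiv] pderiv_monom del: of_nat_Suc)
  then show "pderiv ?Q = q"
    by (simp add: poly_as_sum_of_monoms)
qed

lemma cross_zero_imp_eval_at:
  fixes \<phi> :: "'a::field_char_0 mpoly3"
  assumes "whis w1 w2 w3 \<phi>" "weight_hom w1 w2 w3 \<phi> d" "0 < w3"
  shows "cross_zero \<phi> f \<Longrightarrow> \<exists>q. f = eval_at q \<phi>"
proof (induction "degree f" arbitrary: f rule: less_induct)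
  case less
  obtain g where g: "dx f = g * dx \<phi>" "dy f = g * dy \<phi>" "dz f = g * dz \<phi>"
    and deg: "g = 0 \<or> degree g < degree f"
    using cross_zero_gradient_factor[OF assms less.prems] by blast
  obtain q where q: "g = eval_at q \<phi>"
    using deg less.hyps[OF _ cross_zero_cofactor[OF g]] eval_at_0 by metis
  obtain Q where Q: "pderiv Q = q"
    using pderiv_surj by blast
  have "dx (f - eval_at Q \<phi>) = 0" "dy (f - eval_at Q \<phi>) = 0" "dz (f - eval_at Q \<phi>) = 0"
    by (simp_all add: g q Q derivation_eval_at derivation_dx derivation_dy derivation_dz
        additive.diff[OF derivation_additive[OF derivation_dx]]
        additive.diff[OF derivation_additive[OF derivation_dy]]
        additive.diff[OF derivation_additive[OF derivation_dz]])
  then obtain c where "f - eval_at Q \<phi> = C3 c"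
    using gradient_eq_0_imp_const by blast
  then have "f = eval_at (Q + [:c:]) \<phi>"
    by (simp add: additive.add[OF additive_eval_at] eval_at_const algebra_simps)
  then show ?case
    by blast
qed

theorem mainTheorem3:
  fixes \<phi> :: "'a::field_char_0 mpoly3" and w1 w2 w3 :: nat
  assumes "w1 > 0" "w2 > 0" "w3 > 0" "gcd w1 (gcd w2 w3) = 1"
    and "whis w1 w2 w3 \<phi>"
  shows "Cas \<phi> = {f. cross_zero \<phi> f}
       \<and> {f. cross_zero \<phi> f} = range (\<lambda>q. eval_at q \<phi>)
       \<and> inj (\<lambda>q. eval_at q \<phi>)"
proof (intro conjI)
  show "Cas \<phi> = {f. cross_zero \<phi> f}"
    by (rule Cas_eq_cross_zero)
  obtain d where wh: "weight_hom w1 w2 w3 \<phi> d"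
    using assms(5) by (auto simp: whis_def)
  show "{f. cross_zero \<phi> f} = range (\<lambda>q. eval_at q \<phi>)"
    using cross_zero_imp_eval_at[OF assms(5) wh assms(3)] cross_zero_eval_at by blast
  show "inj (\<lambda>q. eval_at q \<phi>)"
    using inj_eval_at[OF whis_degree_pos[OF assms(5)]] .
qed

end
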